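(* Consider the saddle-point structured problem in the context under the stated assumptions. If $(\bar x,\bar y)$ is an $\varepsilon$-saddle point (for some $\varepsilon\ge0$), then $p(\bar x)-d(\bar y)\le2\varepsilon D_\phi+\frac{3\varepsilon^2}{2\mu}$.
   Context: Let $A\in\mathbb R^{m\times n}$, $f:\mathbb R^n\to\mathbb R$ convex, differentiable with $L_f$-Lipschitz gradient and $\mu$-strongly convex with $\mu>0$, and $r:\mathbb R^n\to\mathbb R\cup\{+\infty\}$, $\phi:\mathbb R^m\to\mathbb R\cup\{+\infty\}$ proper closed convex, with $\mathrm{dom}(\phi)$ bounded and $D_\phi=\max_{y_1,y_2\in\mathrm{dom}(\phi)}\|y_1-y_2\|$. Define $G=f+r$, $p(x)=G(x)+\max_y\{\langle y,Ax\rangle-\phi(y)\}$, $\varphi(y)=\min_x\{G(x)+\langle y,Ax\rangle\}$, $d(y)=\varphi(y)-\phi(y)$. Assume a saddle point $(x^*,y^* )$ exists, i.e. $0\in\partial G(x^* )+A^\top y^*$ and $0\in Ax^*-\partial\phi(y^* )$. A pair $(\bar x,\bar y)$ is an $\varepsilon$-saddle point if $\mathrm{dist}(0,\partial G(\bar x)+A^\top\bar y)\le\varepsilon$ and $\mathrm{dist}(0,A\bar x-\partial\phi(\bar y))\le\varepsilon$, where $\partial$ is the convex subdifferential and $\mathrm{dist}(0,S)=\inf_{s\in S}\|s\|$. *)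

theory Defs
  imports "HOL-Analysis.Analysis" "HOL-Library.Extended_Real"
begin

definition epigraph :: "('a \<Rightarrow> ereal) \<Rightarrow> ('a \<times> real) set" where
  "epigraph h = {(x, t). h x \<le> ereal t}"

definition edom :: "('a \<Rightarrow> ereal) \<Rightarrow> 'a set" where
  "edom h = {x. h x < \<infinity>}"

definition proper_fun :: "('a \<Rightarrow> ereal) \<Rightarrow> bool" where
  "proper_fun h \<longleftrightarrow> (\<forall>x. h x \<noteq> -\<infinity>) \<and> (\<exists>x. h x \<noteq> \<infinity>)"

definition convex_fun :: "('a::real_vector \<Rightarrow> ereal) \<Rightarrow> bool" where
  "convex_fun h \<longleftrightarrow> convex (epigraph h)"

definition closed_fun :: "('a::topological_space \<Rightarrow> ereal) \<Rightarrow> bool" where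
  "closed_fun h \<longleftrightarrow> closed (epigraph h)"

definition subdiff :: "('a::real_inner \<Rightarrow> ereal) \<Rightarrow> 'a \<Rightarrow> 'a set" where
  "subdiff h x = {g. h x \<noteq> \<infinity> \<and> h x \<noteq> -\<infinity> \<and>
                      (\<forall>z. h x + ereal (g \<bullet> (z - x)) \<le> h z)}"

text \<open>dist(0,S) = inf of norms over S, with inf over the empty set = +\<infinity>.\<close>
definition dist0 :: "('a::real_normed_vector) set \<Rightarrow> ereal" where
  "dist0 S = (INF s\<in>S. ereal (norm s))"

definition strongly_convex_on :: "real \<Rightarrow> ('a::real_normed_vector \<Rightarrow> real) \<Rightarrow> bool" where
  "strongly_convex_on \<mu> f \<longleftrightarrow> (\<forall>x y t. 0 \<le> t \<and> t \<le> 1 \<longrightarrow>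
      f (t *\<^sub>R x + (1 - t) *\<^sub>R y) \<le> t * f x + (1 - t) * f y - \<mu> / 2 * t * (1 - t) * (norm (x - y))\<^sup>2)"

definition diam_dom :: "('a::metric_space \<Rightarrow> ereal) \<Rightarrow> real" where
  "diam_dom h = (SUP p\<in>edom h \<times> edom h. dist (fst p) (snd p))"

end

theory Submission
  imports Defs
begin

text \<open>
  Take any \<open>g \<in> \<partial>G(xbar)\<close> and \<open>v \<in> \<partial>\<phi>(ybar)\<close>. Strong convexity turns the subgradient
  inequality for \<open>G\<close> into quadratic growth, and minimising the resulting quadratic bound
  over \<open>x\<close> gives \<open>\<phi>\<^sub>d(ybar) \<ge> G(xbar) + \<langle>ybar, A xbar\<rangle> - \<parallel>g + A\<^sup>T ybar\<parallel>\<^sup>2 / (2\<mu>)\<close>.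
  The subgradient inequality for \<open>\<phi>\<close> and Cauchy-Schwarz over the bounded domain give
  \<open>max\<^sub>y \<langle>y, A xbar\<rangle> - \<phi>(y) \<le> \<langle>ybar, A xbar\<rangle> - \<phi>(ybar) + \<parallel>A xbar - v\<parallel> D\<^sub>\<phi>\<close>.
  Hence the gap is at most \<open>\<parallel>A xbar - v\<parallel> D\<^sub>\<phi> + \<parallel>g + A\<^sup>T ybar\<parallel>\<^sup>2 / (2\<mu>)\<close>; choosing \<open>g, v\<close>
  with residuals arbitrarily close to \<open>\<epsilon>\<close> yields \<open>\<epsilon> D\<^sub>\<phi> + \<epsilon>\<^sup>2/(2\<mu>)\<close>, which is even sharper
  than the claimed bound.
\<close>

lemma convex_fun_le:
  assumes "convex_fun r" "r x = ereal a" "r y = ereal b" "0 \<le> t" "t \<le> 1"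
  shows "r (t *\<^sub>R x + (1 - t) *\<^sub>R y) \<le> ereal (t * a + (1 - t) * b)"
proof -
  have "(x, a) \<in> epigraph r" "(y, b) \<in> epigraph r"
    using assms by (auto simp: epigraph_def)
  then have "t *\<^sub>R (x, a) + (1 - t) *\<^sub>R (y, b) \<in> epigraph r"
    using assms(1,4,5) unfolding convex_fun_def by (intro convexD) auto
  then show ?thesis by (simp add: epigraph_def)
qed

lemma dist_le_diam_dom:
  fixes h :: "'a::real_normed_vector \<Rightarrow> ereal"
  assumes "bounded (edom h)" "x \<in> edom h" "y \<in> edom h"
  shows "dist x y \<le> diam_dom h"
proof -
  obtain e where e: "\<And>z. z \<in> edom h \<Longrightarrow> norm z \<le> e"
    using assms(1) by (auto simp: bounded_iff)
  have "bdd_above ((\<lambda>p. dist (fst p) (snd p)) ` (edom h \<times> edom h))"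
  proof (rule bdd_aboveI2)
    fix p assume "p \<in> edom h \<times> edom h"
    then show "dist (fst p) (snd p) \<le> 2 * e"
      using e[of "fst p"] e[of "snd p"] norm_triangle_ineq4[of "fst p" "snd p"]
      by (auto simp: dist_norm)
  qed
  then show ?thesis
    unfolding diam_dom_def using assms(2,3) by (auto intro: cSUP_upper2[of _ _ "(x, y)"])
qed

lemma diam_dom_nonneg:
  assumes "proper_fun h" "bounded (edom h)"
  shows "0 \<le> diam_dom (h :: 'a::real_normed_vector \<Rightarrow> ereal)"
proof -
  obtain x where "x \<in> edom h"
    using assms(1) by (auto simp: proper_fun_def edom_def less_top)
  from dist_le_diam_dom[OF assms(2) this this] show ?thesis by simp
qed

lemma dist0_le_imp_ex_norm_less:
  assumes "dist0 S \<le> ereal \<epsilon>" "\<epsilon> < e"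
  shows "\<exists>s\<in>S. norm s < e"
proof -
  have "(INF s\<in>S. ereal (norm s)) < ereal e"
    using assms unfolding dist0_def by (simp add: le_less_trans)
  then show ?thesis by (auto simp: INF_less_iff)
qed

lemma subdiff_strongly_convex_growth:
  fixes f :: "'a::real_inner \<Rightarrow> real"
  assumes f: "strongly_convex_on \<mu> f" and r: "convex_fun r" "proper_fun r"
    and g: "g \<in> subdiff (\<lambda>x. ereal (f x) + r x) xb"
  shows "ereal (f xb) + r xb + ereal (g \<bullet> (x - xb) + \<mu> / 2 * (norm (x - xb))\<^sup>2)
           \<le> ereal (f x) + r x"
proof -
  have sub: "\<And>z. ereal (f xb) + r xb + ereal (g \<bullet> (z - xb)) \<le> ereal (f z) + r z"
    using g by (auto simp: subdiff_def)
  obtain b where b: "r xb = ereal b"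
    using g by (cases "r xb") (auto simp: subdiff_def)
  have r_not_MInf: "\<And>z. r z \<noteq> -\<infinity>"
    using r(2) by (auto simp: proper_fun_def)
  show ?thesis
  proof (cases "r x")
    case PInf
    then show ?thesis by simp
  next
    case MInf
    with r_not_MInf show ?thesis by blast
  next
    case (real a)
    define d where "d = x - xb"
    define q where "q = \<mu> / 2 * (norm d)\<^sup>2"
    have along_segment: "f xb + b + g \<bullet> d + (1 - t) * q \<le> f x + a" if t: "0 < t" "t < 1" for t
    proof -
      define z where "z = t *\<^sub>R x + (1 - t) *\<^sub>R xb"
      have "z - xb = t *\<^sub>R d"
        by (simp add: z_def d_def algebra_simps)
      then have "ereal (f xb + b + t * (g \<bullet> d)) \<le> ereal (f z) + r z"
        using sub[of z] b by simp
      also have "\<dots> \<le> ereal (f z) + ereal (t * a + (1 - t) * b)"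
        unfolding z_def using convex_fun_le[OF r(1) real b] t by (intro add_left_mono) auto
      finally have "f xb + b + t * (g \<bullet> d) \<le> f z + (t * a + (1 - t) * b)"
        by simp
      moreover have "f z \<le> t * f x + (1 - t) * f xb - t * (1 - t) * q"
      proof -
        have "f z \<le> t * f x + (1 - t) * f xb - \<mu> / 2 * t * (1 - t) * (norm (x - xb))\<^sup>2"
          using f t unfolding strongly_convex_on_def z_def by simp
        then show ?thesis by (simp add: q_def d_def mult_ac)
      qed
      ultimately have "t * (f xb + b + g \<bullet> d + (1 - t) * q) \<le> t * (f x + a)"
        by (simp add: algebra_simps)
      then show ?thesis using t by simp
    qed
    have "((\<lambda>t. f xb + b + g \<bullet> d + (1 - t) * q) \<longlongrightarrow> f xb + b + g \<bullet> d + q) (at_right 0)"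
      by (auto intro!: tendsto_eq_intros)
    moreover have "\<forall>\<^sub>F t in at_right 0. f xb + b + g \<bullet> d + (1 - t) * q \<le> f x + a"
      using along_segment by (intro eventually_at_rightI[of 0 1]) auto
    ultimately have "f xb + b + g \<bullet> d + q \<le> f x + a"
      by (rule tendsto_upperbound) simp
    then show ?thesis using real b by (simp add: d_def q_def)
  qed
qed

lemma inner_plus_quadratic_ge:
  fixes u d :: "'a::real_inner"
  assumes "\<mu> > 0"
  shows "- (norm u)\<^sup>2 / (2 * \<mu>) \<le> u \<bullet> d + \<mu> / 2 * (norm d)\<^sup>2"
proof -
  have "- (norm u * norm d) \<le> u \<bullet> d"
    using Cauchy_Schwarz_ineq2[of u d] by linarith
  moreover have "0 \<le> (\<mu> * norm d - norm u)\<^sup>2 / (2 * \<mu>)"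
    using assms by simp
  moreover have "(\<mu> * norm d - norm u)\<^sup>2 / (2 * \<mu>)
                   = \<mu> / 2 * (norm d)\<^sup>2 - norm u * norm d + (norm u)\<^sup>2 / (2 * \<mu>)"
    using assms by (simp add: field_simps power2_eq_square)
  ultimately show ?thesis by linarith
qed

lemma quadratic_growth_add_inner_ge:
  fixes G :: "'a::real_inner \<Rightarrow> ereal"
  assumes "\<mu> > 0"
    and growth: "G xb + ereal (g \<bullet> (x - xb) + \<mu> / 2 * (norm (x - xb))\<^sup>2) \<le> G x"
  shows "G xb + ereal (w \<bullet> xb - (norm (g + w))\<^sup>2 / (2 * \<mu>)) \<le> G x + ereal (w \<bullet> x)"
proof -
  have "w \<bullet> xb - (norm (g + w))\<^sup>2 / (2 * \<mu>)
          \<le> g \<bullet> (x - xb) + \<mu> / 2 * (norm (x - xb))\<^sup>2 + w \<bullet> x"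
    using inner_plus_quadratic_ge[OF assms(1), of "g + w" "x - xb"]
    by (simp add: inner_add_left inner_diff_right)
  then have "G xb + ereal (w \<bullet> xb - (norm (g + w))\<^sup>2 / (2 * \<mu>))
               \<le> G xb + ereal (g \<bullet> (x - xb) + \<mu> / 2 * (norm (x - xb))\<^sup>2) + ereal (w \<bullet> x)"
    by (simp add: add.assoc add_left_mono)
  also have "\<dots> \<le> G x + ereal (w \<bullet> x)"
    using growth by (rule add_right_mono)
  finally show ?thesis .
qed

lemma subdiff_conjugate_term_le:
  fixes \<phi> :: "'a::real_inner \<Rightarrow> ereal"
  assumes v: "v \<in> subdiff \<phi> yb" and "proper_fun \<phi>" "bounded (edom \<phi>)"
  shows "ereal (y \<bullet> w) - \<phi> y \<le> ereal (yb \<bullet> w) - \<phi> yb + ereal (norm (w - v) * diam_dom \<phi>)"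
proof -
  obtain b where b: "\<phi> yb = ereal b"
    using v by (cases "\<phi> yb") (auto simp: subdiff_def)
  have sub: "\<phi> yb + ereal (v \<bullet> (y - yb)) \<le> \<phi> y"
    using v by (auto simp: subdiff_def)
  show ?thesis
  proof (cases "\<phi> y")
    case PInf
    then show ?thesis by simp
  next
    case MInf
    with \<open>proper_fun \<phi>\<close> show ?thesis by (simp add: proper_fun_def)
  next
    case (real c)
    have "y \<in> edom \<phi>" "yb \<in> edom \<phi>"
      using b real by (auto simp: edom_def)
    have "(y - yb) \<bullet> (w - v) \<le> norm (y - yb) * norm (w - v)"
      by (rule norm_cauchy_schwarz)
    also have "\<dots> \<le> diam_dom \<phi> * norm (w - v)"
      using dist_le_diam_dom[OF \<open>bounded (edom \<phi>)\<close> \<open>y \<in> edom \<phi>\<close> \<open>yb \<in> edom \<phi>\<close>]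
      by (intro mult_right_mono) (auto simp: dist_norm)
    finally have "(y - yb) \<bullet> (w - v) \<le> norm (w - v) * diam_dom \<phi>"
      by (simp add: mult.commute)
    moreover have "y \<bullet> w - c \<le> yb \<bullet> w - b + (y - yb) \<bullet> (w - v)"
      using sub b real by (simp add: inner_diff_left inner_diff_right inner_commute)
    ultimately show ?thesis
      using b real by simp
  qed
qed

lemma primal_dual_gap_le_residuals:
  fixes A :: "real^'n^'m" and G :: "real^'n \<Rightarrow> ereal" and \<phi> :: "real^'m \<Rightarrow> ereal"
  assumes "\<mu> > 0"
    and g: "g \<in> subdiff G xb"
    and growth: "\<And>x. G xb + ereal (g \<bullet> (x - xb) + \<mu> / 2 * (norm (x - xb))\<^sup>2) \<le> G x"
    and v: "v \<in> subdiff \<phi> yb" and "proper_fun \<phi>" "bounded (edom \<phi>)"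
  shows "G xb + (SUP y. ereal (y \<bullet> (A *v xb)) - \<phi> y)
           - ((INF x. G x + ereal (yb \<bullet> (A *v x))) - \<phi> yb)
         \<le> ereal (norm (A *v xb - v) * diam_dom \<phi> + (norm (g + transpose A *v yb))\<^sup>2 / (2 * \<mu>))"
proof -
  define c where "c = yb \<bullet> (A *v xb)"
  define \<eta> where "\<eta> = norm (g + transpose A *v yb)"
  define \<zeta> where "\<zeta> = norm (A *v xb - v)"
  define S where "S = (SUP y. ereal (y \<bullet> (A *v xb)) - \<phi> y)"
  define Q where "Q = (INF x. G x + ereal (yb \<bullet> (A *v x)))"
  obtain a where a: "G xb = ereal a"
    using g by (cases "G xb") (auto simp: subdiff_def)
  obtain b where b: "\<phi> yb = ereal b"
    using v by (cases "\<phi> yb") (auto simp: subdiff_def)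
  have adjoint: "yb \<bullet> (A *v x) = (transpose A *v yb) \<bullet> x" for x
    by (simp add: dot_lmul_matrix)
  have "ereal (a + c - \<eta>\<^sup>2 / (2 * \<mu>)) \<le> Q"
    unfolding Q_def
  proof (rule INF_greatest)
    fix x
    show "ereal (a + c - \<eta>\<^sup>2 / (2 * \<mu>)) \<le> G x + ereal (yb \<bullet> (A *v x))"
      using quadratic_growth_add_inner_ge[OF \<open>\<mu> > 0\<close> growth[of x], of "transpose A *v yb"] a
      by (simp add: adjoint c_def \<eta>_def add_diff_eq)
  qed
  moreover have "Q \<le> ereal (a + c)"
    unfolding Q_def using a INF_lower[of xb UNIV "\<lambda>x. G x + ereal (yb \<bullet> (A *v x))"]
    by (simp add: c_def)
  moreover have "S \<le> ereal (c - b + \<zeta> * diam_dom \<phi>)"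
    unfolding S_def using subdiff_conjugate_term_le[OF assms(4-6), where w = "A *v xb"] b
    by (auto simp: c_def \<zeta>_def intro: SUP_least)
  moreover have "ereal (c - b) \<le> S"
    unfolding S_def using b SUP_upper[of yb UNIV "\<lambda>y. ereal (y \<bullet> (A *v xb)) - \<phi> y"]
    by (simp add: c_def)
  ultimately show ?thesis
    unfolding S_def[symmetric] Q_def[symmetric] \<eta>_def[symmetric] \<zeta>_def[symmetric]
    using a b by (cases S; cases Q) auto
qed

theorem theorem6p3:
  fixes A :: "real^'n^'m"
    and f :: "real^'n \<Rightarrow> real" and gradf :: "real^'n \<Rightarrow> real^'n"
    and r :: "real^'n \<Rightarrow> ereal" and \<phi> :: "real^'m \<Rightarrow> ereal"
    and Lf \<mu> \<epsilon> :: real and xbar :: "real^'n" and ybar :: "real^'m"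
  assumes f_convex: "convex_on UNIV f"
    and f_grad: "\<And>x. (f has_derivative (\<lambda>h. gradf x \<bullet> h)) (at x)"
    and f_lip: "\<And>x y. norm (gradf x - gradf y) \<le> Lf * norm (x - y)"
    and mu_pos: "\<mu> > 0"
    and f_strong: "strongly_convex_on \<mu> f"
    and r_proper: "proper_fun r" and r_closed: "closed_fun r" and r_convex: "convex_fun r"
    and phi_proper: "proper_fun \<phi>" and phi_closed: "closed_fun \<phi>" and phi_convex: "convex_fun \<phi>"
    and phi_bdd: "bounded (edom \<phi>)"
    and saddle: "\<exists>xs ys. - (transpose A *v ys) \<in> subdiff (\<lambda>x. ereal (f x) + r x) xs
                       \<and> A *v xs \<in> subdiff \<phi> ys"
    and eps_nonneg: "\<epsilon> \<ge> 0"
    and eps1: "dist0 {g + transpose A *v ybar | g. g \<in> subdiff (\<lambda>x. ereal (f x) + r x) xbar}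
                 \<le> ereal \<epsilon>"
    and eps2: "dist0 {A *v xbar - v | v. v \<in> subdiff \<phi> ybar} \<le> ereal \<epsilon>"
  shows "let G = (\<lambda>x. ereal (f x) + r x);
             p = (\<lambda>x. G x + (SUP y. ereal (y \<bullet> (A *v x)) - \<phi> y));
             \<phi>\<^sub>d = (\<lambda>y. INF x. G x + ereal (y \<bullet> (A *v x)));
             d = (\<lambda>y. \<phi>\<^sub>d y - \<phi> y)
         in p xbar - d ybar \<le> ereal (2 * \<epsilon> * diam_dom \<phi> + 3 * \<epsilon>\<^sup>2 / (2 * \<mu>))"
proof -
  define G where "G = (\<lambda>x. ereal (f x) + r x)"
  define gap where "gap = G xbar + (SUP y. ereal (y \<bullet> (A *v xbar)) - \<phi> y)
                            - ((INF x. G x + ereal (ybar \<bullet> (A *v x))) - \<phi> ybar)"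
  define D where "D = diam_dom \<phi>"
  define B where "B = (\<lambda>\<delta>. (\<epsilon> + \<delta>) * D + (\<epsilon> + \<delta>)\<^sup>2 / (2 * \<mu>))"
  have "0 \<le> D"
    unfolding D_def using phi_proper phi_bdd by (rule diam_dom_nonneg)
  have gap_le: "gap \<le> ereal (B \<delta>)" if "0 < \<delta>" for \<delta>
  proof -
    obtain g where g: "g \<in> subdiff G xbar" and g_small: "norm (g + transpose A *v ybar) < \<epsilon> + \<delta>"
      using dist0_le_imp_ex_norm_less[OF eps1, of "\<epsilon> + \<delta>"] \<open>0 < \<delta>\<close> by (auto simp: G_def)
    obtain v where v: "v \<in> subdiff \<phi> ybar" and v_small: "norm (A *v xbar - v) < \<epsilon> + \<delta>"
      using dist0_le_imp_ex_norm_less[OF eps2, of "\<epsilon> + \<delta>"] \<open>0 < \<delta>\<close> by auto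
    have "gap \<le> ereal (norm (A *v xbar - v) * D + (norm (g + transpose A *v ybar))\<^sup>2 / (2 * \<mu>))"
      unfolding gap_def D_def
      using primal_dual_gap_le_residuals[OF mu_pos g _ v phi_proper phi_bdd]
        subdiff_strongly_convex_growth[OF f_strong r_convex r_proper g[unfolded G_def]]
      by (simp add: G_def)
    also have "\<dots> \<le> ereal (B \<delta>)"
      unfolding B_def using \<open>0 \<le> D\<close> mu_pos g_small v_small
      by (auto intro!: add_mono mult_right_mono divide_right_mono power_mono)
    finally show ?thesis .
  qed
  have "((\<lambda>\<delta>. ereal (B \<delta>)) \<longlongrightarrow> ereal (B 0)) (at_right 0)"
    unfolding B_def using mu_pos by (intro tendsto_ereal tendsto_intros) auto
  then have "gap \<le> ereal (B 0)"
    using gap_le by (rule tendsto_lowerbound[OF _ eventually_at_rightI[of 0 1]]) auto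
  also have "B 0 \<le> 2 * \<epsilon> * D + 3 * \<epsilon>\<^sup>2 / (2 * \<mu>)"
    unfolding B_def using \<open>0 \<le> D\<close> eps_nonneg mu_pos by (simp add: field_simps)
  finally show ?thesis
    unfolding Let_def gap_def G_def D_def by simp
qed

end
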